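(* Let $\mathcal{A}\neq\Phi_\ell$ be a central hyperplane arrangement in $V=\mathbb{K}^\ell$ of rank $r$. Let $\pi=(\pi_1,\ldots,\pi_s)$ be a partition of $\mathcal{A}$, let $H_0\in\pi_1$ and let $(\mathcal{A},\mathcal{A}',\mathcal{A}'')$ be the triple associated with $H_0$. Then any two of the following statements imply the third: (i) $\pi$ is nice for $\mathcal{A}$; (ii) $\pi'$ is nice for $\mathcal{A}'$; (iii) the restriction map $\mathrm{R}:\mathcal{A}\setminus\pi_1\to\mathcal{A}''$ is bijective and $\pi''$ is nice for $\mathcal{A}''$.
   Context: $\mathbb{K}$ is a field; a central arrangement is a finite set of linear hyperplanes in $V$; $\Phi_\ell$ is the empty arrangement; the rank of $\mathcal{A}$ is the codimension of $\bigcap_{H\in\mathcal{A}}H$. $L(\mathcal{A})$ is the set of intersections of subsets of $\mathcal{A}$ ($V$ being the empty intersection); for $X\in L(\mathcal{A})$, $\mathcal{A}_X=\{H\in\mathcal{A}\mid X\subseteq H\}$. For $H_0\in\mathcal{A}$ the triple is $\mathcal{A}'=\mathcal{A}\setminus\{H_0\}$, $\mathcal{A}''=\{H_0\cap H\mid H\in\mathcal{A}'\}$ (an arrangement in $H_0$). A partition $\pi=(\pi_1,\ldots,\pi_s)$ of $\mathcal{A}$ (ordered tuple of non-empty disjoint subsets covering $\mathcal{A}$) is independent if for every choice $H_i\in\pi_i$, $\operatorname{codim}(H_1\cap\cdots\cap H_s)=s$; for $X\in L(\mathcal{A})$ the induced partition $\pi_X$ of $\mathcal{A}_X$ consists of the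 non-empty sets $\pi_i\cap\mathcal{A}_X$. $\pi$ is nice (a factorization) for $\mathcal{A}$ if it is independent and for every $X\in L(\mathcal{A})\setminus\{V\}$ some block of $\pi_X$ is a singleton (the empty partition is nice for an empty arrangement). For $H_0\in\pi_1$: $\pi'$ is the partition of $\mathcal{A}'$ by the non-empty sets $\pi_i\cap\mathcal{A}'$; $\mathrm{R}:\mathcal{A}\setminus\pi_1\to\mathcal{A}''$ is $H\mapsto H\cap H_0$; and $\pi''=(\pi_2'',\ldots,\pi_s'')$ with $\pi_i''=\mathrm{R}(\pi_i)$; "$\pi''$ is nice for $\mathcal{A}''$" includes that $\pi''$ is a partition of $\mathcal{A}''$. *)

theory Defs
  imports "HOL-Analysis.Analysis"
begin

text \<open>Vectors of V = K^l are elements of type 'k ^ 'n with 'k a field (l = CARD('n)).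
  All notions are stated relative to an ambient linear subspace W (W = UNIV for V itself,
  W = H0 for the restriction A''), so that codimensions and the empty intersection are
  taken inside W.\<close>

definition hyperplane_in :: "('k::field ^ 'n) set \<Rightarrow> ('k ^ 'n) set \<Rightarrow> bool" where
  "hyperplane_in W H \<longleftrightarrow> vec.subspace H \<and> H \<subseteq> W \<and> vec.dim H + 1 = vec.dim W"

definition central_arrangement_in :: "('k::field ^ 'n) set \<Rightarrow> ('k ^ 'n) set set \<Rightarrow> bool" where
  "central_arrangement_in W A \<longleftrightarrow> vec.subspace W \<and> finite A \<and> (\<forall>H\<in>A. hyperplane_in W H)"

definition codim_in :: "('k::field ^ 'n) set \<Rightarrow> ('k ^ 'n) set \<Rightarrow> nat" where
  "codim_in W X = vec.dim W - vec.dim X"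

definition lattice_in :: "('k::field ^ 'n) set \<Rightarrow> ('k ^ 'n) set set \<Rightarrow> ('k ^ 'n) set set" where
  "lattice_in W A = {W \<inter> \<Inter> B | B. B \<subseteq> A}"

definition localization :: "('k::field ^ 'n) set set \<Rightarrow> ('k ^ 'n) set \<Rightarrow> ('k ^ 'n) set set" where
  "localization A X = {H \<in> A. X \<subseteq> H}"

definition is_partition :: "'a set list \<Rightarrow> 'a set \<Rightarrow> bool" where
  "is_partition \<pi> A \<longleftrightarrow> (\<forall>B\<in>set \<pi>. B \<noteq> {}) \<and>
     (\<forall>i<length \<pi>. \<forall>j<length \<pi>. i \<noteq> j \<longrightarrow> \<pi> ! i \<inter> \<pi> ! j = {}) \<and> \<Union> (set \<pi>) = A"

definition independent_in :: "('k::field ^ 'n) set \<Rightarrow> ('k ^ 'n) set set list \<Rightarrow> bool" where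
  "independent_in W \<pi> \<longleftrightarrow>
     (\<forall>h. (\<forall>i<length \<pi>. h i \<in> \<pi> ! i) \<longrightarrow>
          codim_in W (W \<inter> \<Inter> (h ` {..<length \<pi>})) = length \<pi>)"

text \<open>Nice partition (factorization). The blocks of the induced partition pi_X are the
  non-empty sets pi_i \<inter> A_X; "some block of pi_X is a singleton" is expressed directly.\<close>
definition nice_in :: "('k::field ^ 'n) set \<Rightarrow> ('k ^ 'n) set set \<Rightarrow> ('k ^ 'n) set set list \<Rightarrow> bool" where
  "nice_in W A \<pi> \<longleftrightarrow> is_partition \<pi> A \<and> independent_in W \<pi> \<and>
     (\<forall>X \<in> lattice_in W A - {W}. \<exists>B\<in>set \<pi>. card (B \<inter> localization A X) = 1)"

definition deletion_partition :: "'a set list \<Rightarrow> 'a \<Rightarrow> 'a set list" where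
  "deletion_partition \<pi> H0 = filter (\<lambda>B. B \<noteq> {}) (map (\<lambda>B. B - {H0}) \<pi>)"

definition restriction_arr :: "('k::field ^ 'n) set set \<Rightarrow> ('k ^ 'n) set \<Rightarrow> ('k ^ 'n) set set" where
  "restriction_arr A H0 = {H0 \<inter> H | H. H \<in> A - {H0}}"

definition restriction_partition :: "('k::field ^ 'n) set set list \<Rightarrow> ('k ^ 'n) set \<Rightarrow> ('k ^ 'n) set set list" where
  "restriction_partition \<pi> H0 = map (\<lambda>B. (\<lambda>H. H \<inter> H0) ` B) (tl \<pi>)"

end

theory Submission imports Defs begin

text \<open>Everything is transported through localizations. For X \<subseteq> H0 the blocks of pi''_X are
  the images under R of the blocks pi_i \<inter> A_X with i > 1, and when H0 \<notin> A_X the blocks of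
  pi'_X are those of pi_X, so a singleton block at X for one of pi, pi', pi'' yields one for
  another. Independence is transported the same way: a transversal of pi through H0 is H0
  together with a transversal of pi'', its codimension in V exceeding that in H0 by one,
  while a transversal avoiding H0 is a transversal of pi'. Finally, if pi is nice then R maps
  A - pi_1 onto A'' (at X = H0 \<inter> H a singleton block other than pi_1 supplies a hyperplane
  with the trace of H), and if pi' is nice as well, injectively.\<close>

section \<open>Hyperplanes and codimension\<close>

lemma dim_le_dim_Int_hyperplane:
  fixes Y H :: "('k::field ^ 'n) set"
  assumes "vec.subspace Y" "hyperplane_in UNIV H"
  shows "vec.dim Y \<le> vec.dim (Y \<inter> H) + 1"
proof -
  have H: "vec.subspace H" "vec.dim H + 1 = vec.dim (UNIV :: ('k ^ 'n) set)"
    using assms(2) by (auto simp: hyperplane_in_def)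
  have "vec.dim {y + z |y z. y \<in> Y \<and> z \<in> H} + vec.dim (Y \<inter> H) = vec.dim Y + vec.dim H"
    by (rule vec.dim_sums_Int[OF assms(1) H(1)])
  moreover have "vec.dim {y + z |y z. y \<in> Y \<and> z \<in> H} \<le> vec.dim (UNIV :: ('k ^ 'n) set)"
    by (rule vec.dim_subset) simp
  ultimately show ?thesis using H(2) by linarith
qed

lemma dim_Int_hyperplane:
  fixes Y H :: "('k::field ^ 'n) set"
  assumes "vec.subspace Y" "hyperplane_in UNIV H" "\<not> Y \<subseteq> H"
  shows "vec.dim (Y \<inter> H) + 1 = vec.dim Y"
proof -
  have "vec.dim (Y \<inter> H) \<noteq> vec.dim Y"
    using vec.subspace_dim_equal[of "Y \<inter> H" Y] assms
    by (auto simp: hyperplane_in_def vec.subspace_inter)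
  moreover have "vec.dim (Y \<inter> H) \<le> vec.dim Y"
    by (rule vec.dim_subset) simp
  ultimately show ?thesis using dim_le_dim_Int_hyperplane[OF assms(1,2)] by linarith
qed

lemma hyperplane_subset_eq:
  fixes H K :: "('k::field ^ 'n) set"
  assumes "hyperplane_in UNIV H" "hyperplane_in UNIV K" "H \<subseteq> K"
  shows "H = K"
  using assms vec.subspace_dim_equal[of H K] by (auto simp: hyperplane_in_def)

lemma hyperplane_neq_UNIV:
  fixes H :: "('k::field ^ 'n) set"
  shows "hyperplane_in UNIV H \<Longrightarrow> H \<noteq> UNIV"
  by (auto simp: hyperplane_in_def)

lemma Int_hyperplane_eq_if_subset:
  fixes H0 H K :: "('k::field ^ 'n) set"
  assumes "hyperplane_in UNIV H0" "hyperplane_in UNIV H" "hyperplane_in UNIV K"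
    and "H \<noteq> H0" "K \<noteq> H0" "H0 \<inter> H \<subseteq> K"
  shows "H0 \<inter> H = H0 \<inter> K"
proof -
  have H0: "vec.subspace H0" using assms(1) by (simp add: hyperplane_in_def)
  have "\<not> H0 \<subseteq> H" "\<not> H0 \<subseteq> K"
    using hyperplane_subset_eq assms by metis+
  then have "vec.dim (H0 \<inter> H) = vec.dim (H0 \<inter> K)"
    using dim_Int_hyperplane[OF H0 assms(2)] dim_Int_hyperplane[OF H0 assms(3)] by simp
  moreover have "vec.subspace (H0 \<inter> K)" "vec.subspace (H0 \<inter> H)"
    using H0 assms(2,3) by (simp_all add: hyperplane_in_def vec.subspace_inter)
  moreover have "H0 \<inter> H \<subseteq> H0 \<inter> K" using assms(6) by blast
  ultimately show ?thesis
    using vec.subspace_dim_equal[of "H0 \<inter> H" "H0 \<inter> K"] by simp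
qed

lemma subspace_Inter_hyperplanes:
  fixes F :: "('k::field ^ 'n) set set"
  shows "\<forall>H\<in>F. hyperplane_in UNIV H \<Longrightarrow> vec.subspace (\<Inter>F)"
  by (intro vec.subspace_Inter) (auto simp: hyperplane_in_def)

lemma codim_Inter_hyperplanes_le_card:
  fixes F :: "('k::field ^ 'n) set set"
  assumes "finite F" "\<forall>H\<in>F. hyperplane_in UNIV H"
  shows "codim_in UNIV (\<Inter>F) \<le> card F"
  using assms
proof (induction F rule: finite_induct)
  case (insert H F)
  have "vec.dim (\<Inter>F) \<le> vec.dim (\<Inter>F \<inter> H) + 1"
    using dim_le_dim_Int_hyperplane subspace_Inter_hyperplanes insert.prems by auto
  then show ?case using insert by (simp add: codim_in_def Int_commute)
qed (simp add: codim_in_def)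

lemma codim_in_hyperplane:
  fixes Y H0 :: "('k::field ^ 'n) set"
  assumes "hyperplane_in UNIV H0" "vec.subspace Y" "Y \<subseteq> H0"
  shows "codim_in UNIV Y = codim_in H0 Y + 1"
  using assms vec.dim_subset[of Y H0] unfolding codim_in_def hyperplane_in_def by linarith

section \<open>Ordered partitions\<close>

lemma is_partition_iff:
  "is_partition L S \<longleftrightarrow>
     {} \<notin> set L \<and> distinct L \<and> pairwise disjnt (set L) \<and> \<Union>(set L) = S"
proof
  assume L: "is_partition L S"
  have "distinct L"
    unfolding distinct_conv_nth
  proof (intro allI impI)
    fix i j assume ij: "i < length L" "j < length L" "i \<noteq> j"
    then have "L ! i \<inter> L ! j = {}" "L ! i \<noteq> {}"
      using L unfolding is_partition_def by (auto dest: nth_mem)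
    then show "L ! i \<noteq> L ! j" by auto
  qed
  moreover have "pairwise disjnt (set L)"
    using L unfolding is_partition_def pairwise_def disjnt_def by (metis in_set_conv_nth)
  ultimately show "{} \<notin> set L \<and> distinct L \<and> pairwise disjnt (set L) \<and> \<Union>(set L) = S"
    using L unfolding is_partition_def by blast
next
  assume "{} \<notin> set L \<and> distinct L \<and> pairwise disjnt (set L) \<and> \<Union>(set L) = S"
  then show "is_partition L S"
    unfolding is_partition_def pairwise_def disjnt_def by (auto simp: nth_eq_iff_index_eq)
qed

lemma is_partition_tl:
  assumes "is_partition L S"
  shows "is_partition (tl L) (S - hd L)"
proof (cases L)
  case (Cons B L')
  then have "B \<notin> set L'" "\<forall>C\<in>set L'. disjnt B C"
    using assms by (auto simp: is_partition_iff pairwise_insert)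
  then show ?thesis
    using assms Cons by (auto simp: is_partition_iff pairwise_insert disjnt_iff)
qed (use assms in \<open>simp add: is_partition_def\<close>)

lemma is_partition_image:
  assumes L: "is_partition L S" and inj: "inj_on f S"
  shows "is_partition (map ((`) f) L) (f ` S)"
proof -
  have sub: "B \<subseteq> S" if "B \<in> set L" for B
    using L that by (auto simp: is_partition_iff)
  have disj: "disjnt (f ` B) (f ` C)" if "B \<in> set L" "C \<in> set L" "B \<noteq> C" for B C
    using L that inj_on_image_Int[OF inj sub[OF that(1)] sub[OF that(2)]]
    by (auto simp: is_partition_iff pairwise_def disjnt_def)
  have "inj_on ((`) f) (set L)"
  proof (rule inj_onI)
    fix B C assume "B \<in> set L" "C \<in> set L" "f ` B = f ` C"
    then show "B = C" using disj L by (force simp: is_partition_iff disjnt_def)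
  qed
  then show ?thesis
    using L disj by (auto simp: is_partition_iff distinct_map pairwise_def image_Union)
qed

lemma set_deletion_partition:
  "set (deletion_partition L x) = {B - {x} | B. B \<in> set L \<and> B - {x} \<noteq> {}}"
  unfolding deletion_partition_def by auto

lemma is_partition_deletion:
  assumes L: "is_partition L S"
  shows "is_partition (deletion_partition L x) (S - {x})"
proof -
  let ?L = "filter (\<lambda>B. B - {x} \<noteq> {}) L"
  have eq: "deletion_partition L x = map (\<lambda>B. B - {x}) ?L"
    unfolding deletion_partition_def filter_map by (simp add: comp_def)
  have disj: "disjnt B C" if "B \<in> set L" "C \<in> set L" "B \<noteq> C" for B C
    using L that by (auto simp: is_partition_iff pairwise_def)
  have "inj_on (\<lambda>B. B - {x}) (set ?L)"
    by (rule inj_onI) (use disj in \<open>force simp: disjnt_def\<close>)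
  then have "distinct (deletion_partition L x)"
    using L by (simp add: eq distinct_map is_partition_iff)
  moreover have "pairwise disjnt (set (deletion_partition L x))"
    using disj unfolding set_deletion_partition pairwise_def disjnt_def by blast
  moreover have "\<Union>(set (deletion_partition L x)) = S - {x}"
    using L unfolding set_deletion_partition is_partition_iff by blast
  ultimately show ?thesis
    unfolding is_partition_iff set_deletion_partition by blast
qed

section \<open>Localization and the niceness condition\<close>

lemma card_eq_1_imp_eq: "card S = 1 \<Longrightarrow> x \<in> S \<Longrightarrow> y \<in> S \<Longrightarrow> x = y"
  by (auto simp: card_1_singleton_iff)

lemma localization_Diff_singleton: "localization (S - {H}) X = localization S X - {H}"
  unfolding localization_def by auto

lemma lattice_in_mono: "S \<subseteq> T \<Longrightarrow> X \<in> lattice_in W S \<Longrightarrow> X \<in> lattice_in W T"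
  unfolding lattice_in_def by blast

lemma lattice_in_eq_Inter_localization:
  assumes "X \<in> lattice_in W S"
  shows "X = W \<inter> \<Inter>(localization S X)"
proof -
  obtain B where B: "B \<subseteq> S" "X = W \<inter> \<Inter>B"
    using assms unfolding lattice_in_def by blast
  then have "B \<subseteq> localization S X"
    unfolding localization_def by auto
  then show ?thesis
    using B(2) unfolding localization_def by blast
qed

lemma localization_nonempty:
  "X \<in> lattice_in W S \<Longrightarrow> X \<noteq> W \<Longrightarrow> localization S X \<noteq> {}"
  using lattice_in_eq_Inter_localization by fastforce

text \<open>The closure of X in L(S) has the same localization as X, so the niceness condition
  applies to every X lying in some member of S.\<close>

lemma nice_in_localization:
  assumes "nice_in UNIV S L" "K \<in> S" "X \<subseteq> K" "K \<noteq> UNIV"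
  shows "\<exists>B\<in>set L. card (B \<inter> localization S X) = 1"
proof -
  define Z where "Z = UNIV \<inter> \<Inter>(localization S X)"
  have "Z \<in> lattice_in UNIV S"
    unfolding Z_def lattice_in_def localization_def by blast
  moreover have "Z \<subseteq> K"
    using assms(2,3) unfolding Z_def localization_def by blast
  ultimately have "\<exists>B\<in>set L. card (B \<inter> localization S Z) = 1"
    using assms(1,4) unfolding nice_in_def by auto
  moreover have "localization S Z = localization S X"
    unfolding Z_def localization_def by auto
  ultimately show ?thesis by simp
qed

section \<open>Independent partitions\<close>

lemma extend_to_transversal:
  assumes "\<forall>i<length L. L ! i \<noteq> {}"
  obtains h where "\<forall>i<length L. h i \<in> L ! i" "\<forall>i<length L. f i \<in> L ! i \<longrightarrow> h i = f i"
proof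
  define h where "h i = (if f i \<in> L ! i then f i else SOME y. y \<in> L ! i)" for i
  show "\<forall>i<length L. h i \<in> L ! i" using assms unfolding h_def by (auto simp: some_in_eq)
  show "\<forall>i<length L. f i \<in> L ! i \<longrightarrow> h i = f i" unfolding h_def by auto
qed

lemma INT_lessThan_Suc_shift:
  "\<Inter>(g ` {..<Suc n}) = g 0 \<inter> \<Inter>((\<lambda>i. g (Suc i)) ` {..<n})"
  by (simp add: lessThan_Suc_eq_insert_0 image_image)

lemma independent_in_mono:
  assumes "list_all2 (\<subseteq>) L' L" "independent_in W L"
  shows "independent_in W L'"
  unfolding independent_in_def
proof (intro allI impI)
  fix h assume "\<forall>i<length L'. h i \<in> L' ! i"
  then have "\<forall>i<length L. h i \<in> L ! i"
    using list_all2_lengthD[OF assms(1)] list_all2_nthD[OF assms(1)] by auto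
  then show "codim_in W (W \<inter> \<Inter>(h ` {..<length L'})) = length L'"
    using assms(2) list_all2_lengthD[OF assms(1)] unfolding independent_in_def by simp
qed

lemma independent_in_ConsD:
  fixes L :: "('k::field ^ 'n) set set list"
  assumes ind: "independent_in UNIV (B # L)" and "H \<in> B"
    and hyp: "\<forall>C\<in>set (B # L). \<forall>K\<in>C. hyperplane_in UNIV K"
  shows "independent_in UNIV L"
  unfolding independent_in_def
proof (intro allI impI)
  fix h assume h: "\<forall>i<length L. h i \<in> L ! i"
  define Y where "Y = \<Inter>(h ` {..<length L})"
  have hyp_h: "\<forall>K\<in>h ` {..<length L}. hyperplane_in UNIV K"
    using h hyp nth_mem by fastforce
  have "codim_in UNIV (\<Inter>((case_nat H h) ` {..<Suc (length L)})) = Suc (length L)"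
    using ind h \<open>H \<in> B\<close> unfolding independent_in_def by (auto split: nat.split)
  then have "codim_in UNIV (H \<inter> Y) = Suc (length L)"
    unfolding Y_def INT_lessThan_Suc_shift by simp
  moreover have "vec.dim Y \<le> vec.dim (Y \<inter> H) + 1"
    using \<open>H \<in> B\<close> hyp unfolding Y_def
    by (intro dim_le_dim_Int_hyperplane subspace_Inter_hyperplanes[OF hyp_h]) simp
  moreover have "codim_in UNIV Y \<le> card (h ` {..<length L})"
    unfolding Y_def by (rule codim_Inter_hyperplanes_le_card[OF _ hyp_h]) simp
  moreover have "card (h ` {..<length L}) \<le> length L"
    using card_image_le[of "{..<length L}" h] by simp
  ultimately have "codim_in UNIV Y = length L"
    unfolding codim_in_def by (simp add: Int_commute)
  then show "codim_in UNIV (UNIV \<inter> \<Inter>(h ` {..<length L})) = length L"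
    unfolding Y_def by simp
qed

lemma independent_in_transversal_irredundant:
  fixes L :: "('k::field ^ 'n) set set list"
  assumes ind: "independent_in UNIV L" and h: "\<forall>i<length L. h i \<in> L ! i"
    and hyp: "\<forall>i<length L. hyperplane_in UNIV (h i)"
    and m: "m < length L" and sub: "\<Inter>(h ` ({..<length L} - {m})) \<subseteq> h m"
  shows False
proof -
  define F where "F = h ` ({..<length L} - {m})"
  have "{..<length L} = insert m ({..<length L} - {m})" using m by auto
  then have "\<Inter>(h ` {..<length L}) = h m \<inter> \<Inter>F"
    unfolding F_def by (metis INT_insert)
  also have "\<dots> = \<Inter>F"
    using sub unfolding F_def by blast
  finally have "\<Inter>(h ` {..<length L}) = \<Inter>F" .
  moreover have "codim_in UNIV (UNIV \<inter> \<Inter>(h ` {..<length L})) = length L"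
    using ind h unfolding independent_in_def by blast
  ultimately have "codim_in UNIV (\<Inter>F) = length L" by simp
  moreover have "codim_in UNIV (\<Inter>F) \<le> card F"
    using hyp unfolding F_def by (intro codim_Inter_hyperplanes_le_card) auto
  moreover have "card F \<le> length L - 1"
    unfolding F_def using card_image_le[of "{..<length L} - {m}" h] m by simp
  ultimately show False using m by linarith
qed

section \<open>Deletion and restriction\<close>

lemma restriction_arr_eq_image: "restriction_arr A H0 = (\<lambda>H. H \<inter> H0) ` (A - {H0})"
  unfolding restriction_arr_def by blast

lemma lattice_restriction_iff:
  assumes "H0 \<in> A"
  shows "Y \<in> lattice_in H0 (restriction_arr A H0) \<longleftrightarrow> Y \<in> lattice_in UNIV A \<and> Y \<subseteq> H0"
proof
  assume "Y \<in> lattice_in H0 (restriction_arr A H0)"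
  then obtain B where B: "B \<subseteq> restriction_arr A H0" "Y = H0 \<inter> \<Inter>B"
    unfolding lattice_in_def by blast
  define C where "C = {H \<in> A - {H0}. H0 \<inter> H \<in> B}"
  have "Y = UNIV \<inter> \<Inter>(insert H0 C)"
  proof
    show "Y \<subseteq> UNIV \<inter> \<Inter>(insert H0 C)"
      using B(2) unfolding C_def by blast
    show "UNIV \<inter> \<Inter>(insert H0 C) \<subseteq> Y"
    proof
      fix x assume x: "x \<in> UNIV \<inter> \<Inter>(insert H0 C)"
      have "x \<in> b" if "b \<in> B" for b
      proof -
        obtain H where "H \<in> A - {H0}" "b = H0 \<inter> H"
          using B(1) \<open>b \<in> B\<close> unfolding restriction_arr_def by blast
        then show ?thesis using x \<open>b \<in> B\<close> unfolding C_def by blast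
      qed
      then show "x \<in> Y" using x B(2) by blast
    qed
  qed
  moreover have "insert H0 C \<subseteq> A" using assms unfolding C_def by blast
  ultimately show "Y \<in> lattice_in UNIV A \<and> Y \<subseteq> H0"
    using B(2) unfolding lattice_in_def by blast
next
  assume Y: "Y \<in> lattice_in UNIV A \<and> Y \<subseteq> H0"
  then obtain B where B: "B \<subseteq> A" "Y = UNIV \<inter> \<Inter>B"
    unfolding lattice_in_def by blast
  have "Y = H0 \<inter> \<Inter>((\<lambda>H. H0 \<inter> H) ` (B - {H0}))"
    using B(2) Y by blast
  moreover have "(\<lambda>H. H0 \<inter> H) ` (B - {H0}) \<subseteq> restriction_arr A H0"
    using B(1) unfolding restriction_arr_def by blast
  ultimately show "Y \<in> lattice_in H0 (restriction_arr A H0)"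
    unfolding lattice_in_def by blast
qed

text \<open>Blocks are indexed from 0, so pi ! 0 is the block pi_1 of the paper that contains H0.\<close>

locale arrangement_triple =
  fixes A :: "('k::field ^ 'n) set set" and \<pi> :: "('k ^ 'n) set set list" and H0 :: "('k ^ 'n) set"
  assumes arrangement: "central_arrangement_in UNIV A"
    and partition: "is_partition \<pi> A"
    and partition_nonempty: "\<pi> \<noteq> []"
    and H0_in_first_block: "H0 \<in> \<pi> ! 0"
begin

abbreviation "s \<equiv> length \<pi>"
abbreviation "A' \<equiv> A - {H0}"
abbreviation "A'' \<equiv> restriction_arr A H0"
abbreviation "\<pi>' \<equiv> deletion_partition \<pi> H0"
abbreviation "\<pi>'' \<equiv> restriction_partition \<pi> H0"
abbreviation R :: "('k ^ 'n) set \<Rightarrow> ('k ^ 'n) set" where "R H \<equiv> H \<inter> H0"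

lemma length_pos: "0 < s"
  using partition_nonempty by simp

lemma hyperplane_of_A: "H \<in> A \<Longrightarrow> hyperplane_in UNIV H"
  using arrangement by (simp add: central_arrangement_in_def)

lemma block_subset: "i < s \<Longrightarrow> \<pi> ! i \<subseteq> A"
  using partition unfolding is_partition_def by (metis Union_upper nth_mem)

lemma block_nonempty: "i < s \<Longrightarrow> \<pi> ! i \<noteq> {}"
  using partition unfolding is_partition_def by (metis nth_mem)

lemma block_unique: "i < s \<Longrightarrow> j < s \<Longrightarrow> H \<in> \<pi> ! i \<Longrightarrow> H \<in> \<pi> ! j \<Longrightarrow> i = j"
  using partition unfolding is_partition_def by blast

lemma H0_in_A: "H0 \<in> A"
  using H0_in_first_block block_subset length_pos by blast

lemma hyperplane_H0: "hyperplane_in UNIV H0"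
  using hyperplane_of_A H0_in_A by blast

lemma H0_notin_block: "0 < i \<Longrightarrow> i < s \<Longrightarrow> H0 \<notin> \<pi> ! i"
  using block_unique[of i 0 H0] H0_in_first_block length_pos by auto

lemma block_cover: "H \<in> A \<Longrightarrow> \<exists>i<s. H \<in> \<pi> ! i"
  using partition unfolding is_partition_def by (metis UnionE in_set_conv_nth)

lemma Diff_first_block_iff: "H \<in> A - \<pi> ! 0 \<longleftrightarrow> (\<exists>i. 0 < i \<and> i < s \<and> H \<in> \<pi> ! i)"
proof
  assume "H \<in> A - \<pi> ! 0"
  then show "\<exists>i. 0 < i \<and> i < s \<and> H \<in> \<pi> ! i"
    using block_cover by (metis DiffE gr0I)
next
  assume "\<exists>i. 0 < i \<and> i < s \<and> H \<in> \<pi> ! i"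
  then show "H \<in> A - \<pi> ! 0"
    using block_subset block_unique length_pos by blast
qed

lemma hyperplanes_of_blocks: "\<forall>C\<in>set \<pi>. \<forall>K\<in>C. hyperplane_in UNIV K"
proof (intro ballI)
  fix C K assume "C \<in> set \<pi>" "K \<in> C"
  then obtain i where "i < s" "K \<in> \<pi> ! i" by (auto simp: in_set_conv_nth)
  then show "hyperplane_in UNIV K" using block_subset hyperplane_of_A by blast
qed

lemma partition_Cons: "\<pi> = \<pi> ! 0 # tl \<pi>"
  using partition_nonempty by (cases \<pi>) simp_all

lemma deletion_partition_eq:
  "\<pi>' = (if \<pi> ! 0 = {H0} then tl \<pi> else (\<pi> ! 0 - {H0}) # tl \<pi>)"
proof -
  have "H0 \<notin> B \<and> B \<noteq> {}" if B: "B \<in> set (tl \<pi>)" for B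
  proof -
    obtain k where "k < s - 1" "B = \<pi> ! Suc k"
      using B by (auto simp: in_set_conv_nth nth_tl)
    then show ?thesis using H0_notin_block block_nonempty by simp
  qed
  then have "map (\<lambda>B. B - {H0}) (tl \<pi>) = tl \<pi>" "filter (\<lambda>B. B \<noteq> {}) (tl \<pi>) = tl \<pi>"
    by (auto intro: map_idI)
  then show ?thesis
    using H0_in_first_block unfolding deletion_partition_def by (subst (1 2) partition_Cons) auto
qed

lemma deletion_block: "B \<in> set \<pi>' \<Longrightarrow> \<exists>m<s. B = \<pi> ! m - {H0}"
  unfolding set_deletion_partition by (auto simp: in_set_conv_nth)

lemma independent_deletion:
  assumes "independent_in UNIV \<pi>"
  shows "independent_in UNIV \<pi>'"
proof (cases "\<pi> ! 0 = {H0}")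
  case True
  have "independent_in UNIV (\<pi> ! 0 # tl \<pi>)" "\<forall>C\<in>set (\<pi> ! 0 # tl \<pi>). \<forall>K\<in>C. hyperplane_in UNIV K"
    using assms hyperplanes_of_blocks by (simp_all only: partition_Cons[symmetric])
  then have "independent_in UNIV (tl \<pi>)"
    using independent_in_ConsD H0_in_first_block by blast
  then show ?thesis using True deletion_partition_eq by simp
next
  case False
  have "list_all2 (\<subseteq>) ((\<pi> ! 0 - {H0}) # tl \<pi>) (\<pi> ! 0 # tl \<pi>)"
    by (simp add: list_all2_refl)
  moreover have "independent_in UNIV (\<pi> ! 0 # tl \<pi>)"
    using assms by (simp only: partition_Cons[symmetric])
  ultimately have "independent_in UNIV ((\<pi> ! 0 - {H0}) # tl \<pi>)"
    by (rule independent_in_mono)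
  then show ?thesis using False deletion_partition_eq by simp
qed

lemma length_restriction_partition: "length \<pi>'' = s - 1"
  by (simp add: restriction_partition_def)

lemma nth_restriction_partition: "i < s - 1 \<Longrightarrow> \<pi>'' ! i = R ` (\<pi> ! Suc i)"
  by (simp add: restriction_partition_def nth_tl)

lemma set_restriction_partition:
  "B \<in> set \<pi>'' \<longleftrightarrow> (\<exists>i. 0 < i \<and> i < s \<and> B = R ` (\<pi> ! i))"
proof
  assume "B \<in> set \<pi>''"
  then obtain j where "j < s - 1" "B = \<pi>'' ! j"
    by (metis in_set_conv_nth length_restriction_partition)
  then show "\<exists>i. 0 < i \<and> i < s \<and> B = R ` (\<pi> ! i)"
    using nth_restriction_partition by (intro exI[of _ "Suc j"]) auto
next
  assume "\<exists>i. 0 < i \<and> i < s \<and> B = R ` (\<pi> ! i)"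
  then obtain i where "0 < i" "i < s" "B = R ` (\<pi> ! i)" by blast
  then have "i - 1 < length \<pi>''" "\<pi>'' ! (i - 1) = B"
    using nth_restriction_partition[of "i - 1"] length_restriction_partition by auto
  then show "B \<in> set \<pi>''" by (metis nth_mem)
qed

lemma is_partition_restriction:
  assumes "inj_on R (A - \<pi> ! 0)" "R ` (A - \<pi> ! 0) = A''"
  shows "is_partition \<pi>'' A''"
proof -
  have "is_partition (tl \<pi>) (A - \<pi> ! 0)"
    using is_partition_tl[OF partition] hd_conv_nth[OF partition_nonempty] by simp
  from is_partition_image[OF this assms(1)] show ?thesis
    using assms(2) unfolding restriction_partition_def by simp
qed

lemma localization_restriction:
  assumes "0 < i" "i < s" "Y \<subseteq> H0"
  shows "R ` (\<pi> ! i) \<inter> localization A'' Y = R ` (\<pi> ! i \<inter> localization A Y)"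
proof -
  have "\<pi> ! i \<subseteq> A'" using block_subset H0_notin_block assms(1,2) by blast
  then show ?thesis
    using assms(3) unfolding localization_def restriction_arr_eq_image by auto
qed

lemma card_localization_restriction:
  assumes "inj_on R (A - \<pi> ! 0)" "0 < i" "i < s" "Y \<subseteq> H0"
  shows "card (R ` (\<pi> ! i) \<inter> localization A'' Y) = card (\<pi> ! i \<inter> localization A Y)"
proof -
  have "\<pi> ! i \<inter> localization A Y \<subseteq> A - \<pi> ! 0"
    using Diff_first_block_iff assms(2,3) by blast
  then have "inj_on R (\<pi> ! i \<inter> localization A Y)"
    using inj_on_subset[OF assms(1)] by blast
  then show ?thesis
    using localization_restriction[OF assms(2-4)] by (simp add: card_image)
qed

lemma codim_transversal_through_H0:
  assumes g: "\<forall>i<s. g i \<in> \<pi> ! i" and g0: "g 0 = H0"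
  shows "codim_in UNIV (\<Inter>(g ` {..<s}))
           = codim_in H0 (H0 \<inter> \<Inter>((\<lambda>i. R (g (Suc i))) ` {..<length \<pi>''})) + 1"
proof -
  have "s = Suc (length \<pi>'')"
    using length_pos length_restriction_partition by simp
  then have eq: "\<Inter>(g ` {..<s}) = H0 \<inter> \<Inter>((\<lambda>i. R (g (Suc i))) ` {..<length \<pi>''})"
    using g0 INT_lessThan_Suc_shift[of g] by auto
  have "vec.subspace (\<Inter>(g ` {..<s}))"
    using g block_subset hyperplane_of_A by (intro subspace_Inter_hyperplanes) blast
  then have "codim_in UNIV (\<Inter>(g ` {..<s})) = codim_in H0 (\<Inter>(g ` {..<s})) + 1"
    using eq by (intro codim_in_hyperplane[OF hyperplane_H0]) auto
  then show ?thesis using eq by simp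
qed

lemma independent_restriction_iff:
  "independent_in H0 \<pi>'' \<longleftrightarrow>
     (\<forall>g. (\<forall>i<s. g i \<in> \<pi> ! i) \<longrightarrow> g 0 = H0 \<longrightarrow> codim_in UNIV (\<Inter>(g ` {..<s})) = s)"
proof (intro iffI allI impI)
  fix g assume ind: "independent_in H0 \<pi>''" and g: "\<forall>i<s. g i \<in> \<pi> ! i" and g0: "g 0 = H0"
  have "\<forall>i<length \<pi>''. R (g (Suc i)) \<in> \<pi>'' ! i"
    using g nth_restriction_partition length_restriction_partition by simp
  then have "codim_in H0 (H0 \<inter> \<Inter>((\<lambda>i. R (g (Suc i))) ` {..<length \<pi>''})) = length \<pi>''"
    using ind unfolding independent_in_def by (elim allE[of _ "\<lambda>i. R (g (Suc i))"]) simp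
  then show "codim_in UNIV (\<Inter>(g ` {..<s})) = s"
    using codim_transversal_through_H0[OF g g0] length_restriction_partition length_pos by simp
next
  assume through_H0: "\<forall>g. (\<forall>i<s. g i \<in> \<pi> ! i) \<longrightarrow> g 0 = H0 \<longrightarrow> codim_in UNIV (\<Inter>(g ` {..<s})) = s"
  show "independent_in H0 \<pi>''"
    unfolding independent_in_def
  proof (intro allI impI)
    fix h assume h: "\<forall>i<length \<pi>''. h i \<in> \<pi>'' ! i"
    have "\<exists>H. i < length \<pi>'' \<longrightarrow> H \<in> \<pi> ! Suc i \<and> h i = R H" for i
    proof (cases "i < length \<pi>''")
      case True
      then have "h i \<in> R ` (\<pi> ! Suc i)"
        using h nth_restriction_partition length_restriction_partition by auto
      then show ?thesis by blast
    qed simp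
    then obtain G where G: "\<forall>i<length \<pi>''. G i \<in> \<pi> ! Suc i \<and> h i = R (G i)"
      using choice[of "\<lambda>i H. i < length \<pi>'' \<longrightarrow> H \<in> \<pi> ! Suc i \<and> h i = R H"] by blast
    define g where "g = case_nat H0 G"
    have g: "\<forall>i<s. g i \<in> \<pi> ! i"
      using G H0_in_first_block length_restriction_partition
      unfolding g_def by (auto split: nat.split)
    have g0: "g 0 = H0" unfolding g_def by simp
    have "codim_in H0 (H0 \<inter> \<Inter>((\<lambda>i. R (g (Suc i))) ` {..<length \<pi>''})) + 1 = s"
      using through_H0 g g0 codim_transversal_through_H0[OF g g0] by (elim allE[of _ g]) simp
    moreover have "(\<lambda>i. R (g (Suc i))) ` {..<length \<pi>''} = h ` {..<length \<pi>''}"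
      using G unfolding g_def by (intro image_cong) simp_all
    ultimately have "codim_in H0 (H0 \<inter> \<Inter>(h ` {..<length \<pi>''})) + 1 = s"
      by (simp only:)
    then show "codim_in H0 (H0 \<inter> \<Inter>(h ` {..<length \<pi>''})) = length \<pi>''"
      using length_restriction_partition by simp
  qed
qed

lemma independent_three_blocks:
  assumes ind: "independent_in UNIV \<pi>" and idx: "distinct [i, j, m]" "i < s" "j < s" "m < s"
    and "Hi \<in> \<pi> ! i" "Hj \<in> \<pi> ! j" "Hm \<in> \<pi> ! m" and sub: "Hi \<inter> Hj \<subseteq> Hm"
  shows False
proof -
  define f where "f k = (if k = i then Hi else if k = j then Hj else Hm)" for k
  obtain h where h: "\<forall>k<s. h k \<in> \<pi> ! k" "\<forall>k<s. f k \<in> \<pi> ! k \<longrightarrow> h k = f k"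
    using extend_to_transversal[of \<pi> f] block_nonempty by blast
  have "h i = Hi" "h j = Hj" "h m = Hm"
    using h(2) idx assms(6-8) unfolding f_def by auto
  then have "\<Inter>(h ` ({..<s} - {m})) \<subseteq> h m"
    using idx sub by auto
  moreover have "\<forall>k<s. hyperplane_in UNIV (h k)"
    using h(1) block_subset hyperplane_of_A by blast
  ultimately show False
    using independent_in_transversal_irredundant[OF ind h(1)] idx(4) by blast
qed

lemma nice_block:
  assumes "nice_in UNIV A \<pi>" "K \<in> A" "X \<subseteq> K"
  obtains m where "m < s" "card (\<pi> ! m \<inter> localization A X) = 1"
proof -
  obtain B where "B \<in> set \<pi>" "card (B \<inter> localization A X) = 1"
    using nice_in_localization[OF assms] hyperplane_neq_UNIV hyperplane_of_A assms(2) by blast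
  then show thesis using that by (auto simp: in_set_conv_nth)
qed

lemma nice_deletion_block:
  assumes "nice_in UNIV A' \<pi>'" "K \<in> A'" "X \<subseteq> K"
  obtains m where "m < s" "card (\<pi> ! m \<inter> localization A X - {H0}) = 1"
proof -
  obtain B where "B \<in> set \<pi>'" "card (B \<inter> localization A' X) = 1"
    using nice_in_localization[OF assms] hyperplane_neq_UNIV hyperplane_of_A assms(2) by blast
  moreover obtain m where "m < s" "B = \<pi> ! m - {H0}"
    using deletion_block calculation(1) by blast
  moreover have "(\<pi> ! m - {H0}) \<inter> localization A' X = \<pi> ! m \<inter> localization A X - {H0}"
    using localization_Diff_singleton by blast
  ultimately show thesis using that by simp
qed


lemma first_block_localization:
  assumes "card (\<pi> ! 0 \<inter> localization A X) = 1" "X \<subseteq> H0"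
  shows "\<pi> ! 0 \<inter> localization A X = {H0}"
proof -
  have "H0 \<in> \<pi> ! 0 \<inter> localization A X"
    using H0_in_first_block H0_in_A assms(2) unfolding localization_def by simp
  moreover obtain H where "\<pi> ! 0 \<inter> localization A X = {H}"
    using assms(1) by (auto simp: card_1_singleton_iff)
  ultimately show ?thesis by simp
qed

lemma independent_block_misses_trace:
  assumes ind: "independent_in UNIV \<pi>" and a: "0 < a" "a < s" "K \<in> \<pi> ! a"
    and m: "m < s" "m \<noteq> 0" "m \<noteq> a"
  shows "\<pi> ! m \<inter> localization A (H0 \<inter> K) = {}"
proof (rule equals0I)
  fix H assume "H \<in> \<pi> ! m \<inter> localization A (H0 \<inter> K)"
  then have "H \<in> \<pi> ! m" "H0 \<inter> K \<subseteq> H" unfolding localization_def by simp_all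
  then show False
    using independent_three_blocks[OF ind, of 0 a m H0 K H] a m H0_in_first_block length_pos
    by auto
qed

text \<open>Two hyperplanes of A - pi_1 with the same trace X on H0 lie in one block pi_a, since
  all blocks but pi_1 and pi_a miss X. Then pi_a has two members at X, so the singleton block
  of pi_X is pi_1 with localization {H0}, and pi'_X has no singleton block.\<close>

lemma restriction_inj_on:
  assumes nice: "nice_in UNIV A \<pi>" and nice': "nice_in UNIV A' \<pi>'"
  shows "inj_on R (A - \<pi> ! 0)"
proof (rule inj_onI, rule ccontr)
  fix K1 K2 assume K1: "K1 \<in> A - \<pi> ! 0" and K2: "K2 \<in> A - \<pi> ! 0"
    and same_trace: "R K1 = R K2" and "K1 \<noteq> K2"
  have ind: "independent_in UNIV \<pi>" using nice by (simp add: nice_in_def)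
  obtain a where a: "0 < a" "a < s" "K1 \<in> \<pi> ! a" using K1 Diff_first_block_iff by blast
  obtain b where b: "0 < b" "b < s" "K2 \<in> \<pi> ! b" using K2 Diff_first_block_iff by blast
  define X where "X = H0 \<inter> K1"
  have others: "\<pi> ! m \<inter> localization A X = {}" if "m < s" "m \<noteq> 0" "m \<noteq> a" for m
    unfolding X_def by (rule independent_block_misses_trace[OF ind a that])
  have "X \<subseteq> K1" "X \<subseteq> K2" "K1 \<in> A'" using same_trace K1 H0_in_first_block unfolding X_def by auto
  then have K2_at_X: "K2 \<in> \<pi> ! b \<inter> localization A X"
    using K2 b(3) unfolding localization_def by blast
  have "b = a"
  proof (rule ccontr)
    assume "b \<noteq> a"
    then have "\<pi> ! b \<inter> localization A X = {}" using b(1,2) by (intro others) auto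
    then show False using K2_at_X by blast
  qed
  have two: "K1 \<in> \<pi> ! a \<inter> localization A X - {H0}" "K2 \<in> \<pi> ! a \<inter> localization A X - {H0}"
    using K1 K2 K2_at_X a \<open>b = a\<close> \<open>X \<subseteq> K1\<close> H0_in_first_block
    unfolding localization_def by auto
  then have crowded: "card (\<pi> ! a \<inter> localization A X) \<noteq> 1"
    "card (\<pi> ! a \<inter> localization A X - {H0}) \<noteq> 1"
    using card_eq_1_imp_eq[of _ K1 K2] \<open>K1 \<noteq> K2\<close> by blast+
  obtain m where m: "m < s" "card (\<pi> ! m \<inter> localization A X) = 1"
    using nice_block[OF nice] \<open>X \<subseteq> K1\<close> K1 by blast
  have "m = 0"
    using m others[OF m(1)] crowded(1) by fastforce
  then have "\<pi> ! 0 \<inter> localization A X - {H0} = {}"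
    using first_block_localization m(2) unfolding X_def by simp
  moreover obtain m' where m': "m' < s" "card (\<pi> ! m' \<inter> localization A X - {H0}) = 1"
    using nice_deletion_block[OF nice'] \<open>X \<subseteq> K1\<close> \<open>K1 \<in> A'\<close> by blast
  ultimately show False
    using others[OF m'(1)] crowded(2) by (cases "m' = 0"; cases "m' = a") auto
qed

lemma restriction_image_eq:
  assumes nice: "nice_in UNIV A \<pi>"
  shows "R ` (A - \<pi> ! 0) = A''"
proof
  show "R ` (A - \<pi> ! 0) \<subseteq> A''"
    using H0_in_first_block unfolding restriction_arr_eq_image by blast
  show "A'' \<subseteq> R ` (A - \<pi> ! 0)"
  proof
    fix G assume "G \<in> A''"
    then obtain H where H: "H \<in> A'" "G = R H"
      unfolding restriction_arr_eq_image by blast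
    show "G \<in> R ` (A - \<pi> ! 0)"
    proof (cases "H \<in> \<pi> ! 0")
      case False
      then show ?thesis using H by blast
    next
      case True
      define X where "X = H0 \<inter> H"
      have "H \<in> A" "X \<subseteq> H" using H unfolding X_def by auto
      then obtain m where m: "m < s" "card (\<pi> ! m \<inter> localization A X) = 1"
        by (rule nice_block[OF nice])
      have "H \<in> \<pi> ! 0 \<inter> localization A X" "H0 \<in> \<pi> ! 0 \<inter> localization A X"
        using True \<open>H \<in> A\<close> H0_in_first_block H0_in_A unfolding localization_def X_def by auto
      then have "m \<noteq> 0"
        using m(2) card_eq_1_imp_eq[of _ H H0] H(1) by auto
      obtain K where K: "\<pi> ! m \<inter> localization A X = {K}"
        using m(2) by (auto simp: card_1_singleton_iff)
      then have "K \<in> A - \<pi> ! 0" "X \<subseteq> K"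
        using Diff_first_block_iff m(1) \<open>m \<noteq> 0\<close> unfolding localization_def by auto
      then have "H0 \<inter> H = H0 \<inter> K"
        using Int_hyperplane_eq_if_subset[OF hyperplane_H0] hyperplane_of_A H H0_in_first_block
        unfolding X_def by blast
      then show ?thesis using H(2) \<open>K \<in> A - \<pi> ! 0\<close> by blast
    qed
  qed
qed

lemma independent_restriction:
  assumes "independent_in UNIV \<pi>"
  shows "independent_in H0 \<pi>''"
proof -
  have "\<forall>g. (\<forall>i<s. g i \<in> \<pi> ! i) \<longrightarrow> g 0 = H0 \<longrightarrow> codim_in UNIV (\<Inter>(g ` {..<s})) = s"
    using assms unfolding independent_in_def by auto
  then show ?thesis unfolding independent_restriction_iff .
qed

lemma restriction_nice_condition:
  assumes nice: "nice_in UNIV A \<pi>" and nice': "nice_in UNIV A' \<pi>'"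
    and inj: "inj_on R (A - \<pi> ! 0)" and Y: "Y \<in> lattice_in H0 A'' - {H0}"
  shows "\<exists>B\<in>set \<pi>''. card (B \<inter> localization A'' Y) = 1"
proof -
  have Y_lattice: "Y \<in> lattice_in UNIV A" and "Y \<subseteq> H0" "Y \<noteq> H0"
    using Y lattice_restriction_iff[OF H0_in_A] by auto
  have "\<not> localization A Y \<subseteq> {H0}"
  proof
    assume "localization A Y \<subseteq> {H0}"
    then have "H0 \<subseteq> Y"
      using lattice_in_eq_Inter_localization[OF Y_lattice] by blast
    then show False using \<open>Y \<subseteq> H0\<close> \<open>Y \<noteq> H0\<close> by blast
  qed
  then obtain K where "K \<in> A" "K \<in> A'" "Y \<subseteq> K"
    unfolding localization_def by blast
  obtain m where m: "m < s" "card (\<pi> ! m \<inter> localization A Y) = 1"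
    by (rule nice_block[OF nice \<open>K \<in> A\<close> \<open>Y \<subseteq> K\<close>])
  have "\<exists>i. 0 < i \<and> i < s \<and> card (\<pi> ! i \<inter> localization A Y) = 1"
  proof (cases "m = 0")
    case True
    then have first: "\<pi> ! 0 \<inter> localization A Y = {H0}"
      using first_block_localization m(2) \<open>Y \<subseteq> H0\<close> by simp
    obtain m' where m': "m' < s" "card (\<pi> ! m' \<inter> localization A Y - {H0}) = 1"
      by (rule nice_deletion_block[OF nice' \<open>K \<in> A'\<close> \<open>Y \<subseteq> K\<close>])
    have "m' \<noteq> 0"
    proof
      assume "m' = 0"
      with m'(2) have "card (\<pi> ! 0 \<inter> localization A Y - {H0}) = 1" by simp
      then show False unfolding first by simp
    qed
    then have "\<pi> ! m' \<inter> localization A Y - {H0} = \<pi> ! m' \<inter> localization A Y"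
      using H0_notin_block m'(1) by blast
    then show ?thesis using m' \<open>m' \<noteq> 0\<close> by auto
  qed (use m in auto)
  then obtain i where i: "0 < i" "i < s" "card (\<pi> ! i \<inter> localization A Y) = 1"
    by blast
  then have "R ` (\<pi> ! i) \<in> set \<pi>''"
    using set_restriction_partition by blast
  moreover have "card (R ` (\<pi> ! i) \<inter> localization A'' Y) = 1"
    using card_localization_restriction[OF inj i(1,2) \<open>Y \<subseteq> H0\<close>] i(3) by simp
  ultimately show ?thesis by blast
qed

lemma restriction_nice:
  assumes nice: "nice_in UNIV A \<pi>" and nice': "nice_in UNIV A' \<pi>'"
  shows "bij_betw R (A - \<pi> ! 0) A'' \<and> nice_in H0 A'' \<pi>''"
proof -
  have inj: "inj_on R (A - \<pi> ! 0)" by (rule restriction_inj_on[OF nice nice'])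
  have image: "R ` (A - \<pi> ! 0) = A''" by (rule restriction_image_eq[OF nice])
  have "independent_in H0 \<pi>''"
    using nice independent_restriction by (simp add: nice_in_def)
  then show ?thesis
    using inj image is_partition_restriction restriction_nice_condition[OF nice nice' inj]
    unfolding bij_betw_def nice_in_def by blast
qed

lemma nice_restriction_block:
  assumes nice'': "nice_in H0 A'' \<pi>''" and inj: "inj_on R (A - \<pi> ! 0)"
    and X: "X \<in> lattice_in UNIV A" "X \<subseteq> H0" "X \<noteq> H0"
  obtains j where "0 < j" "j < s" "card (\<pi> ! j \<inter> localization A X) = 1"
proof -
  have "X \<in> lattice_in H0 A'' - {H0}"
    using X lattice_restriction_iff[OF H0_in_A] by blast
  then obtain B where "B \<in> set \<pi>''" "card (B \<inter> localization A'' X) = 1"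
    using nice'' unfolding nice_in_def by blast
  moreover obtain j where "0 < j" "j < s" "B = R ` (\<pi> ! j)"
    using calculation(1) set_restriction_partition[of B] by blast
  ultimately show thesis
    using that card_localization_restriction[OF inj _ _ X(2)] by simp
qed

lemma deletion_nice_condition:
  assumes nice: "nice_in UNIV A \<pi>" and nice'': "nice_in H0 A'' \<pi>''"
    and inj: "inj_on R (A - \<pi> ! 0)" and X: "X \<in> lattice_in UNIV A' - {UNIV}"
  shows "\<exists>B\<in>set \<pi>'. card (B \<inter> localization A' X) = 1"
proof -
  have X_lattice: "X \<in> lattice_in UNIV A"
    using X lattice_in_mono[of A' A] by blast
  have "localization A' X \<noteq> {}"
    by (rule localization_nonempty) (use X in auto)
  then obtain K where "K \<in> A'" "X \<subseteq> K"
    unfolding localization_def by blast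
  then have "K \<in> A" by blast
  obtain m where m: "m < s" "card (\<pi> ! m \<inter> localization A X) = 1"
    by (rule nice_block[OF nice \<open>K \<in> A\<close> \<open>X \<subseteq> K\<close>])
  have "\<exists>i<s. card (\<pi> ! i \<inter> localization A X) = 1 \<and> H0 \<notin> \<pi> ! i \<inter> localization A X"
  proof (cases "H0 \<in> \<pi> ! m \<inter> localization A X")
    case True
    then have "X \<subseteq> H0" unfolding localization_def by simp
    moreover have "X \<noteq> H0"
      using hyperplane_subset_eq[OF hyperplane_H0 hyperplane_of_A] \<open>K \<in> A'\<close> \<open>X \<subseteq> K\<close> by blast
    ultimately obtain j where "0 < j" "j < s" "card (\<pi> ! j \<inter> localization A X) = 1"
      using nice_restriction_block[OF nice'' inj X_lattice] by blast
    then show ?thesis using H0_notin_block by blast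
  qed (use m in blast)
  then obtain i where i: "i < s" "card (\<pi> ! i \<inter> localization A X) = 1"
    "H0 \<notin> \<pi> ! i \<inter> localization A X" by blast
  then have eq: "(\<pi> ! i - {H0}) \<inter> localization A' X = \<pi> ! i \<inter> localization A X"
    using localization_Diff_singleton by blast
  then have "\<pi> ! i - {H0} \<noteq> {}" using i(2) by force
  then have "\<pi> ! i - {H0} \<in> set \<pi>'"
    using nth_mem[OF i(1)] unfolding set_deletion_partition by blast
  then show ?thesis using eq i(2) by metis
qed

lemma deletion_nice:
  assumes nice: "nice_in UNIV A \<pi>" and restr: "bij_betw R (A - \<pi> ! 0) A'' \<and> nice_in H0 A'' \<pi>''"
  shows "nice_in UNIV A' \<pi>'"
proof -
  have "inj_on R (A - \<pi> ! 0)" "nice_in H0 A'' \<pi>''"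
    using restr by (simp_all add: bij_betw_def)
  moreover have "independent_in UNIV \<pi>'"
    using nice independent_deletion by (simp add: nice_in_def)
  ultimately show ?thesis
    using is_partition_deletion[OF partition] deletion_nice_condition[OF nice]
    unfolding nice_in_def by blast
qed

text \<open>A transversal of pi through H0 is governed by pi'', any other one is a transversal
  of pi' (then H0 is not alone in pi_1, so pi' has the same length as pi).\<close>

lemma independent_of_deletion_restriction:
  assumes ind': "independent_in UNIV \<pi>'" and ind'': "independent_in H0 \<pi>''"
  shows "independent_in UNIV \<pi>"
  unfolding independent_in_def
proof (intro allI impI)
  fix g assume g: "\<forall>i<s. g i \<in> \<pi> ! i"
  show "codim_in UNIV (UNIV \<inter> \<Inter>(g ` {..<s})) = s"
  proof (cases "g 0 = H0")
    case True
    then show ?thesis using ind'' g unfolding independent_restriction_iff by simp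
  next
    case False
    then have "\<pi> ! 0 \<noteq> {H0}" using g length_pos by force
    then have \<pi>': "\<pi>' = (\<pi> ! 0 - {H0}) # tl \<pi>"
      using deletion_partition_eq by simp
    have "g i \<in> \<pi>' ! i" if "i < s" for i
    proof (cases i)
      case 0
      then show ?thesis using g False length_pos unfolding \<pi>' by simp
    next
      case (Suc k)
      then show ?thesis using g that unfolding \<pi>' by (simp add: nth_tl)
    qed
    moreover have "length \<pi>' = s" unfolding \<pi>' using length_pos by simp
    ultimately show ?thesis using ind' unfolding independent_in_def by metis
  qed
qed

lemma nice_condition_of_deletion_restriction:
  assumes nice': "nice_in UNIV A' \<pi>'" and nice'': "nice_in H0 A'' \<pi>''"
    and inj: "inj_on R (A - \<pi> ! 0)" and X: "X \<in> lattice_in UNIV A - {UNIV}"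
  shows "\<exists>B\<in>set \<pi>. card (B \<inter> localization A X) = 1"
proof -
  have X_lattice: "X \<in> lattice_in UNIV A" using X by blast
  have "localization A X \<noteq> {}"
    by (rule localization_nonempty) (use X in auto)
  then obtain K where K: "K \<in> A" "X \<subseteq> K"
    unfolding localization_def by blast
  have "\<exists>i<s. card (\<pi> ! i \<inter> localization A X) = 1"
  proof (cases "H0 \<in> localization A X")
    case False
    then have "K \<in> A'" using K unfolding localization_def by auto
    then obtain m where "m < s" "card (\<pi> ! m \<inter> localization A X - {H0}) = 1"
      using nice_deletion_block[OF nice' _ K(2)] by blast
    then show ?thesis using False by auto
  next
    case True
    then have "X \<subseteq> H0" unfolding localization_def by simp
    show ?thesis
    proof (cases "X = H0")
      case True
      have "H = H0" if "H \<in> localization A X" for H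
        using that hyperplane_subset_eq[OF hyperplane_H0 hyperplane_of_A] True
        unfolding localization_def by blast
      then have "\<pi> ! 0 \<inter> localization A X = {H0}"
        using \<open>H0 \<in> localization A X\<close> H0_in_first_block by blast
      then show ?thesis using length_pos by (intro exI[of _ 0]) simp
    next
      case False
      then show ?thesis
        using nice_restriction_block[OF nice'' inj X_lattice \<open>X \<subseteq> H0\<close>] by metis
    qed
  qed
  then show ?thesis by (metis nth_mem)
qed

lemma nice_of_deletion_restriction:
  assumes nice': "nice_in UNIV A' \<pi>'" and restr: "bij_betw R (A - \<pi> ! 0) A'' \<and> nice_in H0 A'' \<pi>''"
  shows "nice_in UNIV A \<pi>"
proof -
  have "inj_on R (A - \<pi> ! 0)" "nice_in H0 A'' \<pi>''"
    using restr by (simp_all add: bij_betw_def)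
  moreover have "independent_in UNIV \<pi>"
    using independent_of_deletion_restriction nice' restr by (simp add: nice_in_def)
  ultimately show ?thesis
    using partition nice_condition_of_deletion_restriction[OF nice'] unfolding nice_in_def by blast
qed

end

theorem theorem3p5:
  fixes A :: "('k::field ^ 'n) set set"
    and \<pi> :: "('k ^ 'n) set set list"
    and H0 :: "('k ^ 'n) set"
  assumes arr: "central_arrangement_in UNIV A"
    and nonempty: "A \<noteq> {}"
    and part: "is_partition \<pi> A"
    and H0: "\<pi> \<noteq> []" "H0 \<in> \<pi> ! 0"
  defines "P1 \<equiv> nice_in UNIV A \<pi>"
    and "P2 \<equiv> nice_in UNIV (A - {H0}) (deletion_partition \<pi> H0)"
    and "P3 \<equiv> bij_betw (\<lambda>H. H \<inter> H0) (A - \<pi> ! 0) (restriction_arr A H0) \<and>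
              nice_in H0 (restriction_arr A H0) (restriction_partition \<pi> H0)"
  shows "(P1 \<and> P2 \<longrightarrow> P3) \<and> (P1 \<and> P3 \<longrightarrow> P2) \<and> (P2 \<and> P3 \<longrightarrow> P1)"
proof -
  \<comment> \<open>nonempty is implied by part and H0: the first block is a non-empty subset of A.\<close>
  interpret arrangement_triple A \<pi> H0
    using arr part H0 by unfold_locales
  show ?thesis
    unfolding P1_def P2_def P3_def
    using restriction_nice deletion_nice nice_of_deletion_restriction by blast
qed

end
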